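(* Let $(X,\mathcal{B},\mu,T)$ be a measure-preserving transformation of type $\mathbf{II}_\infty$. Let $\alpha$ be a local partition whose core $A$ is a sweep-out set. Then $$\lim_{n\to\infty}\sup\Bigl\{\mu(a):\ a\in\bigvee_{k=0}^{n-1}T^{-k}\alpha,\ 0<\mu(a)<\infty\Bigr\}=0.$$
   Context: Let $(X,\mathcal{B},\mu)$ be a standard $\sigma$-finite measure space and $T$ a measure-preserving transformation. Type $\mathbf{II}_\infty$: $T$ is conservative and there is no $T$-invariant set of finite positive measure. For a countable partition $\alpha$, define $H_\mu(\alpha)=\sum_{a\in\alpha,\,0<\mu(a)<\infty}\mu(a)\log\frac{1}{\mu(a)}$; atoms of infinite measure contribute $0$. A countable partition $\alpha$ is local with core $A$ if $0<\mu(A)<\infty$, $X\setminus A\in\alpha$ and $H_\mu(\alpha)<\infty$. A set $A$ is a sweep-out set if $\bigcup_{n\ge0}T^{-n}A=X$ mod $\mu$. *)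

theory Defs
  imports "HOL-Analysis.Analysis"
begin

definition standard_borel :: "'a measure \<Rightarrow> bool" where
  "standard_borel M \<longleftrightarrow> (\<exists>\<tau>. completely_metrizable_space \<tau> \<and> separable_space \<tau> \<and>
      topspace \<tau> = space M \<and> sets M = sigma_sets (topspace \<tau>) {U. openin \<tau> U})"

definition standard_sigma_finite :: "'a measure \<Rightarrow> bool" where
  "standard_sigma_finite M \<longleftrightarrow> standard_borel M \<and> sigma_finite_measure M"

definition mpt :: "'a measure \<Rightarrow> ('a \<Rightarrow> 'a) \<Rightarrow> bool" where
  "mpt M T \<longleftrightarrow> T \<in> measurable M M \<and>
     (\<forall>B \<in> sets M. emeasure M (T -` B \<inter> space M) = emeasure M B)"

definition wandering :: "'a measure \<Rightarrow> ('a \<Rightarrow> 'a) \<Rightarrow> 'a set \<Rightarrow> bool" where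
  "wandering M T W \<longleftrightarrow> W \<in> sets M \<and>
     disjoint_family (\<lambda>n::nat. (T ^^ n) -` W \<inter> space M)"

definition conservative :: "'a measure \<Rightarrow> ('a \<Rightarrow> 'a) \<Rightarrow> bool" where
  "conservative M T \<longleftrightarrow> (\<forall>W. wandering M T W \<longrightarrow> emeasure M W = 0)"

definition invariant_set :: "'a measure \<Rightarrow> ('a \<Rightarrow> 'a) \<Rightarrow> 'a set \<Rightarrow> bool" where
  "invariant_set M T B \<longleftrightarrow> B \<in> sets M \<and>
     emeasure M (((T -` B \<inter> space M) - B) \<union> (B - (T -` B \<inter> space M))) = 0"

definition type_II_infty :: "'a measure \<Rightarrow> ('a \<Rightarrow> 'a) \<Rightarrow> bool" where
  "type_II_infty M T \<longleftrightarrow> conservative M T \<and>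
     \<not> (\<exists>B. invariant_set M T B \<and> 0 < emeasure M B \<and> emeasure M B < \<infinity>)"

definition countable_partition :: "'a measure \<Rightarrow> 'a set set \<Rightarrow> bool" where
  "countable_partition M \<alpha> \<longleftrightarrow> countable \<alpha> \<and> \<alpha> \<subseteq> sets M \<and> disjoint \<alpha> \<and> \<Union>\<alpha> = space M"

definition fin_atoms :: "'a measure \<Rightarrow> 'a set set \<Rightarrow> 'a set set" where
  "fin_atoms M \<alpha> = {a \<in> \<alpha>. 0 < emeasure M a \<and> emeasure M a < \<infinity>}"

definition ent_term :: "'a measure \<Rightarrow> 'a set \<Rightarrow> real" where
  "ent_term M a = measure M a * ln (1 / measure M a)"

(* H_mu(alpha) < infinity : the defining series converges (absolutely) *)
definition finite_entropy :: "'a measure \<Rightarrow> 'a set set \<Rightarrow> bool" where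
  "finite_entropy M \<alpha> \<longleftrightarrow> (ent_term M) summable_on (fin_atoms M \<alpha>)"

definition entropy :: "'a measure \<Rightarrow> 'a set set \<Rightarrow> real" where
  "entropy M \<alpha> = (\<Sum>\<^sub>\<infinity>a\<in>fin_atoms M \<alpha>. ent_term M a)"

definition local_partition :: "'a measure \<Rightarrow> 'a set set \<Rightarrow> 'a set \<Rightarrow> bool" where
  "local_partition M \<alpha> A \<longleftrightarrow> countable_partition M \<alpha> \<and> A \<in> sets M \<and>
     0 < emeasure M A \<and> emeasure M A < \<infinity> \<and> space M - A \<in> \<alpha> \<and> finite_entropy M \<alpha>"

definition sweep_out :: "'a measure \<Rightarrow> ('a \<Rightarrow> 'a) \<Rightarrow> 'a set \<Rightarrow> bool" where
  "sweep_out M T A \<longleftrightarrow> A \<in> sets M \<and>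
     emeasure M (space M - (\<Union>n. (T ^^ n) -` A \<inter> space M)) = 0"

definition join_part :: "'a measure \<Rightarrow> ('a \<Rightarrow> 'a) \<Rightarrow> 'a set set \<Rightarrow> nat \<Rightarrow> 'a set set" where
  "join_part M T \<alpha> n = {space M \<inter> (\<Inter>k<n. (T ^^ k) -` c k) | c. \<forall>k<n. c k \<in> \<alpha>}"

end

theory Submission
  imports Defs
begin

text \<open>
  Every atom of the refined partition (the join of T^-k alpha, k < n) is a cylinder
  {x. T^k x \<in> c k for all k < n} with atoms c k of alpha.  Since X - A is an atom, all
  other atoms lie in A, and a cylinder of finite measure falls into one of three classes:
  (i) all c k = X - A: it is the set of points avoiding A up to time n; these sets
      decrease to a null set because A sweeps out, so they become small as soon as one
      of them has finite measure;
  (ii) the first k with c k inside A is large: the cylinder lies in the set of points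
      entering A for the first time at time k, whose measure equals (a Kac-type
      identity) that of the points of A not returning to A at times 1..k; by
      conservativity this tends to 0;
  (iii) that k is small: then T^k maps the cylinder into a cylinder of length m + 1
      starting inside A.  Such cylinders are uniformly small for large m: otherwise a
      nested-intersection argument yields an infinite cylinder of positive finite
      measure; by recurrence its name is periodic, and the union of its shifts is an
      invariant set of finite positive measure, which type II-infinity excludes.
\<close>

locale mpt_system =
  fixes M :: "'a measure" and T :: "'a \<Rightarrow> 'a"
  assumes mpt: "mpt M T"
begin

lemma measurable_T: "T \<in> measurable M M"
  using mpt unfolding mpt_def by auto

lemma emeasure_preimage: "B \<in> sets M \<Longrightarrow> emeasure M (T -` B \<inter> space M) = emeasure M B"
  using mpt unfolding mpt_def by auto

lemma measurable_funpow: "T ^^ k \<in> measurable M M"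
proof (induction k)
  case (Suc k)
  have "T \<circ> (T ^^ k) \<in> measurable M M"
    using measurable_comp[OF Suc measurable_T] .
  then show ?case by (simp add: comp_def)
qed simp

lemma funpow_in_space: "x \<in> space M \<Longrightarrow> (T ^^ k) x \<in> space M"
  using measurable_space[OF measurable_funpow] .

lemma funpow_preimage_sets: "B \<in> sets M \<Longrightarrow> (T ^^ k) -` B \<inter> space M \<in> sets M"
  using measurable_sets[OF measurable_funpow] .

lemma emeasure_funpow_preimage:
  "B \<in> sets M \<Longrightarrow> emeasure M ((T ^^ k) -` B \<inter> space M) = emeasure M B"
proof (induction k arbitrary: B)
  case 0
  then show ?case using sets.sets_into_space by (simp add: Int_absorb2)
next
  case (Suc k)
  have "(T ^^ Suc k) -` B \<inter> space M = (T ^^ k) -` (T -` B \<inter> space M) \<inter> space M"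
    using funpow_in_space by (auto simp: funpow_Suc_right)
  then show ?case
    using Suc measurable_sets[OF measurable_T] emeasure_preimage by presburger
qed

text \<open>A set of finite measure that \<open>T\<close> maps into itself is invariant: its preimage
  contains it and has the same finite measure.\<close>

lemma subinvariant_imp_invariant:
  assumes Y: "Y \<in> sets M" "emeasure M Y < \<infinity>" and sub: "Y \<subseteq> T -` Y \<inter> space M"
  shows "invariant_set M T Y"
proof -
  have TY: "T -` Y \<inter> space M \<in> sets M"
    using measurable_sets[OF measurable_T Y(1)] .
  have "emeasure M ((T -` Y \<inter> space M) - Y) = emeasure M (T -` Y \<inter> space M) - emeasure M Y"
    using Y sub TY by (intro emeasure_Diff) auto
  also have "\<dots> = 0"
    using emeasure_preimage[OF Y(1)] Y(2) by (simp add: diff_eq_0_iff_ennreal)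
  finally show ?thesis
    unfolding invariant_set_def using sub Y(1) by (simp add: Diff_eq_empty_iff[THEN iffD2])
qed

lemma chain_emeasure_incseq:
  assumes Q: "\<And>j. Q j \<in> sets M" and step: "\<And>j. Q j \<subseteq> T -` Q (Suc j) \<inter> space M"
  shows "incseq (\<lambda>j. emeasure M (Q j))"
proof (rule incseq_SucI)
  fix j
  have "emeasure M (Q j) \<le> emeasure M (T -` Q (Suc j) \<inter> space M)"
    using step Q measurable_sets[OF measurable_T] by (intro emeasure_mono) auto
  then show "emeasure M (Q j) \<le> emeasure M (Q (Suc j))"
    using emeasure_preimage[OF Q] by simp
qed

text \<open>A cycle of sets \<open>Q 0, ..., Q n = Q 0\<close>, each mapped by \<open>T\<close> into the next, has an
  invariant union of finite measure: each \<open>Q j\<close> has measure at most that of \<open>Q 0\<close>.\<close>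

lemma cyclic_chain_invariant:
  assumes Q: "\<And>j. Q j \<in> sets M" and step: "\<And>j. Q j \<subseteq> T -` Q (Suc j) \<inter> space M"
    and cycle: "Q n = Q 0" and n: "0 < n" and fin: "emeasure M (Q 0) < \<infinity>"
  shows "invariant_set M T (\<Union>j<n. Q j)" and "emeasure M (\<Union>j<n. Q j) < \<infinity>"
proof -
  define Y where "Y = (\<Union>j<n. Q j)"
  have Y: "Y \<in> sets M"
    unfolding Y_def using Q by auto
  have bound: "emeasure M (Q j) \<le> emeasure M (Q 0)" if "j \<le> n" for j
    using that cycle chain_emeasure_incseq[of Q, OF Q step] by (metis incseq_def)
  have "emeasure M Y \<le> (\<Sum>j<n. emeasure M (Q j))"
    unfolding Y_def using Q by (intro emeasure_subadditive_finite) auto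
  also have "\<dots> \<le> (\<Sum>j<n. emeasure M (Q 0))"
    by (intro sum_mono bound) simp
  also have "\<dots> < \<infinity>"
    using fin by (simp add: ennreal_mult_less_top of_nat_less_top)
  finally have Y_fin: "emeasure M Y < \<infinity>" .
  have "Y \<subseteq> T -` Y \<inter> space M"
  proof
    fix z assume "z \<in> Y"
    then obtain j where j: "j < n" "z \<in> Q j"
      unfolding Y_def by auto
    then have "z \<in> T -` Q (Suc j) \<inter> space M"
      using step by blast
    moreover have "Q (Suc j) \<subseteq> Y"
    proof (cases "Suc j = n")
      case True
      then show ?thesis using n cycle unfolding Y_def by auto
    next
      case False
      then show ?thesis using j unfolding Y_def by (intro UN_upper) auto
    qed
    ultimately show "z \<in> T -` Y \<inter> space M" by blast
  qed
  then have "invariant_set M T Y"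
    using Y Y_fin by (intro subinvariant_imp_invariant)
  then show "invariant_set M T (\<Union>j<n. Q j)" "emeasure M (\<Union>j<n. Q j) < \<infinity>"
    using Y_fin by (simp_all add: Y_def)
qed

end


text \<open>Poincare recurrence for conservative maps: a set of positive measure is not
  wandering, so some point of it returns to it.\<close>

lemma conservative_recurrence:
  assumes "conservative M T" "P \<in> sets M" "0 < emeasure M P"
  obtains x n where "x \<in> P" "0 < n" "(T ^^ n) x \<in> P"
proof -
  have "\<not> disjoint_family (\<lambda>n. (T ^^ n) -` P \<inter> space M)"
    using assms unfolding conservative_def wandering_def by auto
  then obtain i j y where ij: "i < j"
    and y: "y \<in> (T ^^ i) -` P \<inter> space M" "y \<in> (T ^^ j) -` P \<inter> space M"
    unfolding disjoint_family_on_def by (metis disjoint_iff linorder_neqE_nat)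
  have "(T ^^ (j - i)) ((T ^^ i) y) = (T ^^ j) y"
    using ij by (metis funpow_add le_add_diff_inverse2 less_imp_le o_apply)
  then show ?thesis
    using that[of "(T ^^ i) y" "j - i"] y ij by simp
qed

definition avoiding :: "'a measure \<Rightarrow> ('a \<Rightarrow> 'a) \<Rightarrow> 'a set \<Rightarrow> nat \<Rightarrow> 'a set" where
  "avoiding M T A k = {x \<in> space M. \<forall>j<k. (T ^^ j) x \<notin> A}"

definition first_entry :: "'a measure \<Rightarrow> ('a \<Rightarrow> 'a) \<Rightarrow> 'a set \<Rightarrow> nat \<Rightarrow> 'a set" where
  "first_entry M T A k = {x \<in> avoiding M T A k. (T ^^ k) x \<in> A}"

definition late_return :: "'a measure \<Rightarrow> ('a \<Rightarrow> 'a) \<Rightarrow> 'a set \<Rightarrow> nat \<Rightarrow> 'a set" where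
  "late_return M T A k = {x \<in> A. T x \<in> avoiding M T A k}"

lemma avoiding_split:
  "avoiding M T A k = first_entry M T A k \<union> avoiding M T A (Suc k)"
  "first_entry M T A k \<inter> avoiding M T A (Suc k) = {}"
  by (auto simp: first_entry_def avoiding_def less_Suc_eq)

lemma late_return_split:
  "late_return M T A k = (A \<inter> T -` first_entry M T A k) \<union> late_return M T A (Suc k)"
  "(A \<inter> T -` first_entry M T A k) \<inter> late_return M T A (Suc k) = {}"
  unfolding late_return_def using avoiding_split[of M T A k] by auto

context mpt_system
begin

context
  fixes A :: "'a set"
  assumes A: "A \<in> sets M"
begin

lemma A_space: "A \<subseteq> space M"
  using sets.sets_into_space[OF A] .

lemma avoiding_sets: "avoiding M T A k \<in> sets M"
proof -
  have "avoiding M T A k = space M - (\<Union>j<k. (T ^^ j) -` A \<inter> space M)"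
    unfolding avoiding_def by auto
  also have "\<dots> \<in> sets M"
    using funpow_preimage_sets[OF A] by (intro sets.Diff sets.top sets.finite_UN) auto
  finally show ?thesis .
qed

lemma first_entry_sets: "first_entry M T A k \<in> sets M"
proof -
  have "first_entry M T A k = avoiding M T A k \<inter> ((T ^^ k) -` A \<inter> space M)"
    unfolding first_entry_def avoiding_def by auto
  then show ?thesis
    using avoiding_sets funpow_preimage_sets[OF A] by auto
qed

lemma late_return_sets: "late_return M T A k \<in> sets M"
proof -
  have "late_return M T A k = A \<inter> (T -` avoiding M T A k \<inter> space M)"
    unfolding late_return_def using A_space by auto
  then show ?thesis
    using A measurable_sets[OF measurable_T avoiding_sets] by auto
qed

lemma avoiding_Suc_iff:
  "x \<in> avoiding M T A (Suc k) \<longleftrightarrow> x \<in> space M \<and> x \<notin> A \<and> T x \<in> avoiding M T A k"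
proof -
  have "(T ^^ Suc j) x = (T ^^ j) (T x)" for j
    by (metis funpow_Suc_right o_apply)
  then show ?thesis
    using measurable_space[OF measurable_T, of x] by (auto simp: avoiding_def All_less_Suc2)
qed

lemma first_entry_Suc_iff:
  "x \<in> first_entry M T A (Suc k) \<longleftrightarrow> x \<in> space M \<and> x \<notin> A \<and> T x \<in> first_entry M T A k"
proof -
  have "(T ^^ Suc k) x = (T ^^ k) (T x)"
    by (metis funpow_Suc_right o_apply)
  then show ?thesis
    unfolding first_entry_def using avoiding_Suc_iff by auto
qed

lemma preimage_first_entry_split:
  "T -` first_entry M T A k \<inter> space M = first_entry M T A (Suc k) \<union> (A \<inter> T -` first_entry M T A k)"
  "first_entry M T A (Suc k) \<inter> (A \<inter> T -` first_entry M T A k) = {}"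
  using first_entry_Suc_iff A_space by auto

text \<open>Kac-type identity: the first entry at time \<open>k\<close> has the measure of the late return
  after \<open>k\<close>.  Both sequences lose the same (finite) amount at each step.\<close>

lemma emeasure_first_entry_eq_late_return:
  assumes A_fin: "emeasure M A < \<infinity>"
  shows "emeasure M (first_entry M T A k) = emeasure M (late_return M T A k)"
proof (induction k)
  case 0
  have "first_entry M T A 0 = A" "late_return M T A 0 = A"
    using A_space measurable_space[OF measurable_T]
    by (auto simp: first_entry_def late_return_def avoiding_def)
  then show ?case by simp
next
  case (Suc k)
  define R where "R = A \<inter> T -` first_entry M T A k"
  have R: "R \<in> sets M"
  proof -
    have "R = A \<inter> (T -` first_entry M T A k \<inter> space M)"
      unfolding R_def using A_space by auto
    then show ?thesis
      using A measurable_sets[OF measurable_T first_entry_sets] by auto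
  qed
  have R_fin: "emeasure M R \<noteq> \<infinity>"
    using emeasure_mono[of R A M] A A_fin by (auto simp: R_def top_unique)
  have "emeasure M (first_entry M T A k) = emeasure M (T -` first_entry M T A k \<inter> space M)"
    using emeasure_preimage[OF first_entry_sets] by simp
  also have "\<dots> = emeasure M R + emeasure M (first_entry M T A (Suc k))"
    using plus_emeasure[OF first_entry_sets R preimage_first_entry_split(2)[of k, folded R_def]]
    unfolding preimage_first_entry_split(1) R_def by (simp add: add.commute Un_commute)
  finally have first: "emeasure M (first_entry M T A k)
      = emeasure M R + emeasure M (first_entry M T A (Suc k))" .
  have late: "emeasure M (late_return M T A k)
      = emeasure M R + emeasure M (late_return M T A (Suc k))"
    using plus_emeasure[OF R late_return_sets late_return_split(2)[where M=M and T=T and A=A and k=k, folded R_def]]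
      late_return_split(1)[where M=M and T=T and A=A and k=k, folded R_def] by simp
  show ?case
    using first late Suc.IH R_fin by (metis ennreal_add_left_cancel)
qed

lemma late_return_Inter_null:
  assumes "conservative M T"
  shows "emeasure M (\<Inter>k. late_return M T A k) = 0"
proof (rule ccontr)
  let ?W = "\<Inter>k. late_return M T A k"
  have W: "?W \<in> sets M"
    using late_return_sets by auto
  assume "emeasure M ?W \<noteq> 0"
  then have "0 < emeasure M ?W"
    by (simp add: zero_less_iff_neq_zero)
  then obtain x n where x: "x \<in> ?W" "0 < n" "(T ^^ n) x \<in> ?W"
    using conservative_recurrence[OF assms W] by blast
  have "T x \<in> avoiding M T A n"
    using x(1) unfolding late_return_def by auto
  then have "(T ^^ (n - 1)) (T x) \<notin> A"
    using x(2) unfolding avoiding_def by auto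
  moreover have "(T ^^ (n - 1)) (T x) = (T ^^ n) x"
    using x(2) by (metis Suc_diff_1 funpow_Suc_right o_apply)
  moreover have "(T ^^ n) x \<in> A"
    using x(3) unfolding late_return_def by auto
  ultimately show False by simp
qed

lemma first_entry_tendsto_zero:
  assumes "conservative M T" and A_fin: "emeasure M A < \<infinity>"
  shows "(\<lambda>k. emeasure M (first_entry M T A k)) \<longlonglongrightarrow> 0"
proof -
  have fin: "emeasure M (late_return M T A k) \<noteq> \<infinity>" for k
    using emeasure_mono[of "late_return M T A k" A M] A A_fin
    by (auto simp: late_return_def top_unique)
  have "decseq (late_return M T A)"
    by (auto simp: decseq_def late_return_def avoiding_def)
  then have "(\<lambda>k. emeasure M (late_return M T A k)) \<longlonglongrightarrow> emeasure M (\<Inter>k. late_return M T A k)"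
    using late_return_sets fin by (intro Lim_emeasure_decseq) auto
  then show ?thesis
    using emeasure_first_entry_eq_late_return[OF A_fin] late_return_Inter_null[OF assms(1)]
    by simp
qed

text \<open>For a sweep-out set the avoiding sets decrease to the null set of points that never
  visit \<open>A\<close>; once one of them has finite measure, their measures tend to zero.\<close>

lemma avoiding_tendsto_zero:
  assumes "sweep_out M T A" and N: "emeasure M (avoiding M T A N) < \<infinity>"
  shows "(\<lambda>k. emeasure M (avoiding M T A k)) \<longlonglongrightarrow> 0"
proof (rule LIMSEQ_offset[where k = N])
  have fin: "emeasure M (avoiding M T A (k + N)) \<noteq> \<infinity>" for k
  proof -
    have "avoiding M T A (k + N) \<subseteq> avoiding M T A N"
      by (auto simp: avoiding_def)
    then have "emeasure M (avoiding M T A (k + N)) \<le> emeasure M (avoiding M T A N)"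
      using avoiding_sets by (rule emeasure_mono)
    then show ?thesis
      using N by (auto simp: top_unique)
  qed
  have "decseq (\<lambda>k. avoiding M T A (k + N))"
    by (auto simp: decseq_def avoiding_def)
  then have "(\<lambda>k. emeasure M (avoiding M T A (k + N)))
      \<longlonglongrightarrow> emeasure M (\<Inter>k. avoiding M T A (k + N))"
    using avoiding_sets fin by (intro Lim_emeasure_decseq) auto
  moreover have "(\<Inter>k. avoiding M T A (k + N)) = space M - (\<Union>n. (T ^^ n) -` A \<inter> space M)"
  proof (intro equalityI subsetI)
    fix x assume x: "x \<in> (\<Inter>k. avoiding M T A (k + N))"
    have "x \<in> space M \<and> (T ^^ n) x \<notin> A" for n
    proof -
      have "x \<in> avoiding M T A (Suc n + N)"
        using x by blast
      then show ?thesis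
        unfolding avoiding_def by auto
    qed
    then show "x \<in> space M - (\<Union>n. (T ^^ n) -` A \<inter> space M)"
      by auto
  qed (auto simp: avoiding_def)
  ultimately show "(\<lambda>k. emeasure M (avoiding M T A (k + N))) \<longlonglongrightarrow> 0"
    using assms(1) unfolding sweep_out_def by simp
qed

lemma eventually_avoiding_small:
  assumes "sweep_out M T A" "0 < \<delta>"
  shows "eventually (\<lambda>n. emeasure M (avoiding M T A n) < \<infinity> \<longrightarrow>
      emeasure M (avoiding M T A n) < \<delta>) sequentially"
proof (cases "\<exists>N. emeasure M (avoiding M T A N) < \<infinity>")
  case True
  then obtain N where "emeasure M (avoiding M T A N) < \<infinity>"
    by blast
  from order_tendstoD(2)[OF avoiding_tendsto_zero[OF assms(1) this] assms(2)]
  show ?thesis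
    by eventually_elim simp
next
  case False
  then show ?thesis
    by simp
qed

end

end

definition cyl :: "'a measure \<Rightarrow> ('a \<Rightarrow> 'a) \<Rightarrow> (nat \<Rightarrow> 'a set) \<Rightarrow> nat set \<Rightarrow> 'a set" where
  "cyl M T c I = space M \<inter> (\<Inter>k\<in>I. (T ^^ k) -` c k)"

lemma join_part_eq_cylinders:
  "join_part M T \<alpha> n = {cyl M T c {..<n} | c. \<forall>k<n. c k \<in> \<alpha>}"
  unfolding join_part_def cyl_def by simp

lemma cyl_mono: "J \<subseteq> I \<Longrightarrow> cyl M T c I \<subseteq> cyl M T c J"
  by (auto simp: cyl_def)

lemma cyl_cong: "(\<And>k. k \<in> I \<Longrightarrow> c k = d k) \<Longrightarrow> cyl M T c I = cyl M T d I"
  by (auto simp: cyl_def)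

lemma cyl_subset_first_atom: "0 \<in> I \<Longrightarrow> cyl M T c I \<subseteq> c 0"
  by (auto simp: cyl_def)

lemma cyl_UNIV_eq_Inter: "cyl M T c UNIV = (\<Inter>m. cyl M T c {..m})"
proof (intro equalityI subsetI)
  fix x assume x: "x \<in> (\<Inter>m. cyl M T c {..m})"
  have "x \<in> space M \<and> (T ^^ k) x \<in> c k" for k
  proof -
    have "x \<in> cyl M T c {..k}"
      using x by blast
    then show ?thesis
      by (auto simp: cyl_def)
  qed
  then show "x \<in> cyl M T c UNIV"
    by (auto simp: cyl_def)
qed (auto simp: cyl_def)

lemma partition_atom_unique:
  assumes "countable_partition M \<alpha>" "a \<in> \<alpha>" "b \<in> \<alpha>" "x \<in> a" "x \<in> b"
  shows "a = b"
proof (rule ccontr)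
  assume "a \<noteq> b"
  then have "a \<inter> b = {}"
    using assms(1-3) unfolding countable_partition_def by (blast dest: disjointD)
  then show False
    using assms(4,5) by blast
qed

lemma atom_subset_core:
  assumes \<alpha>: "countable_partition M \<alpha>" and "space M - A \<in> \<alpha>" "a \<in> \<alpha>" "a \<noteq> space M - A"
  shows "a \<subseteq> A"
proof -
  have "a \<inter> (space M - A) = {}"
    using assms unfolding countable_partition_def by (blast dest: disjointD)
  moreover have "a \<subseteq> space M"
    using \<alpha> \<open>a \<in> \<alpha>\<close> unfolding countable_partition_def by blast
  ultimately show ?thesis
    by blast
qed

lemma cyl_names_agree:
  assumes \<alpha>: "countable_partition M \<alpha>" and c: "\<forall>k\<in>I. c k \<in> \<alpha>" and d: "\<forall>k\<in>I. d k \<in> \<alpha>"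
    and x: "x \<in> cyl M T c I" "x \<in> cyl M T d I" and k: "k \<in> I"
  shows "c k = d k"
  using partition_atom_unique[OF \<alpha>, of "c k" "d k" "(T ^^ k) x"] c d x k
  by (auto simp: cyl_def)

lemma countable_cylinders:
  assumes "countable \<alpha>" "finite I"
  shows "countable {cyl M T c I | c. \<forall>k\<in>I. c k \<in> \<alpha>}"
proof -
  have "{cyl M T c I | c. \<forall>k\<in>I. c k \<in> \<alpha>} \<subseteq> (\<lambda>c. cyl M T c I) ` PiE I (\<lambda>_. \<alpha>)"
  proof
    fix a assume "a \<in> {cyl M T c I | c. \<forall>k\<in>I. c k \<in> \<alpha>}"
    then obtain c where c: "a = cyl M T c I" "\<forall>k\<in>I. c k \<in> \<alpha>"
      by auto
    then have "restrict c I \<in> PiE I (\<lambda>_. \<alpha>)"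
      by auto
    moreover have "a = cyl M T (restrict c I) I"
      unfolding c(1) by (rule cyl_cong) simp
    ultimately show "a \<in> (\<lambda>c. cyl M T c I) ` PiE I (\<lambda>_. \<alpha>)"
      by blast
  qed
  moreover have "countable ((\<lambda>c. cyl M T c I) ` PiE I (\<lambda>_. \<alpha>))"
    using assms by (intro countable_image countable_PiE)
  ultimately show ?thesis
    by (rule countable_subset)
qed

lemma emeasure_Inter_decseq_lower_bound:
  assumes G: "\<And>m. G m \<in> sets M" and dec: "decseq G" and fin: "emeasure M (G 0) < \<infinity>"
    and bound: "\<And>m. \<delta> \<le> emeasure M (G m)"
  shows "\<delta> \<le> emeasure M (\<Inter>m. G m)"
proof -
  have "emeasure M (G m) \<noteq> \<infinity>" for m
  proof -
    have "emeasure M (G m) < \<infinity>"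
      using emeasure_mono[OF decseqD[OF dec le0] G] fin by (rule le_less_trans)
    then show ?thesis by simp
  qed
  then have "(INF m. emeasure M (G m)) = emeasure M (\<Inter>m. G m)"
    using G dec by (intro INF_emeasure_decseq) auto
  then show ?thesis
    using bound by (metis le_INF_iff)
qed

definition heavy_cylinders ::
    "'a measure \<Rightarrow> ('a \<Rightarrow> 'a) \<Rightarrow> 'a set set \<Rightarrow> 'a set \<Rightarrow> ennreal \<Rightarrow> nat \<Rightarrow> 'a set set" where
  "heavy_cylinders M T \<alpha> B \<delta> m =
     {cyl M T c {..m} | c. (\<forall>k\<le>m. c k \<in> \<alpha>) \<and> c 0 \<subseteq> B \<and> \<delta> \<le> emeasure M (cyl M T c {..m})}"

lemma heavy_cylinders_subset: "\<Union>(heavy_cylinders M T \<alpha> B \<delta> m) \<subseteq> B"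
proof
  fix x assume "x \<in> \<Union>(heavy_cylinders M T \<alpha> B \<delta> m)"
  then obtain c where "x \<in> cyl M T c {..m}" "c 0 \<subseteq> B"
    unfolding heavy_cylinders_def by blast
  then show "x \<in> B"
    using cyl_subset_first_atom[of "{..m}" M T c] by auto
qed

lemma heavy_cylinders_point:
  assumes \<alpha>: "countable_partition M \<alpha>" and x: "x \<in> \<Union>(heavy_cylinders M T \<alpha> B \<delta> m)"
    and c: "\<And>k. c k \<in> \<alpha>" "x \<in> cyl M T c UNIV"
  shows "c 0 \<subseteq> B" and "\<delta> \<le> emeasure M (cyl M T c {..m})"
proof -
  obtain d where d: "x \<in> cyl M T d {..m}" "\<forall>k\<le>m. d k \<in> \<alpha>" "d 0 \<subseteq> B"
      "\<delta> \<le> emeasure M (cyl M T d {..m})"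
    using x unfolding heavy_cylinders_def by blast
  have x_c: "x \<in> cyl M T c {..m}"
    using c(2) cyl_mono[of "{..m}" UNIV M T c] by blast
  have d_atoms: "\<forall>k\<in>{..m}. d k \<in> \<alpha>" and c_atoms: "\<forall>k\<in>{..m}. c k \<in> \<alpha>"
    using d(2) c(1) by simp_all
  have agree: "d k = c k" if "k \<in> {..m}" for k
    using cyl_names_agree[OF \<alpha> d_atoms c_atoms d(1) x_c that] .
  have "cyl M T d {..m} = cyl M T c {..m}"
    using agree by (rule cyl_cong)
  moreover have "d 0 = c 0"
    using agree by simp
  ultimately show "c 0 \<subseteq> B" "\<delta> \<le> emeasure M (cyl M T c {..m})"
    using d(3,4) by simp_all
qed

context mpt_system
begin

lemma cyl_sets:
  assumes "countable I" "\<And>k. k \<in> I \<Longrightarrow> c k \<in> sets M"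
  shows "cyl M T c I \<in> sets M"
proof (cases "I = {}")
  case True
  then show ?thesis by (simp add: cyl_def)
next
  case False
  then have "cyl M T c I = (\<Inter>k\<in>I. (T ^^ k) -` c k \<inter> space M)"
    unfolding cyl_def by auto
  also have "\<dots> \<in> sets M"
    using assms False by (intro sets.countable_INT) (auto intro: funpow_preimage_sets)
  finally show ?thesis .
qed

lemma partition_cyl_sets:
  "countable_partition M \<alpha> \<Longrightarrow> countable I \<Longrightarrow> (\<And>k. k \<in> I \<Longrightarrow> c k \<in> \<alpha>) \<Longrightarrow> cyl M T c I \<in> sets M"
  by (intro cyl_sets) (auto simp: countable_partition_def)

lemma point_name:
  assumes \<alpha>: "countable_partition M \<alpha>" and x: "x \<in> space M"
  obtains c where "\<And>k. c k \<in> \<alpha>" "x \<in> cyl M T c UNIV"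
proof -
  define c where "c k = (SOME a. a \<in> \<alpha> \<and> (T ^^ k) x \<in> a)" for k
  have "c k \<in> \<alpha> \<and> (T ^^ k) x \<in> c k" for k
  proof -
    have "\<exists>a. a \<in> \<alpha> \<and> (T ^^ k) x \<in> a"
      using \<alpha> funpow_in_space[OF x, of k] unfolding countable_partition_def by blast
    then show ?thesis
      unfolding c_def by (rule someI_ex)
  qed
  then show ?thesis
    using that[of c] x by (auto simp: cyl_def)
qed

lemma cyl_shift:
  assumes x: "x \<in> cyl M T c J" and sub: "(+) k ` I \<subseteq> J"
  shows "(T ^^ k) x \<in> cyl M T (\<lambda>j. c (k + j)) I"
proof -
  have "(T ^^ j) ((T ^^ k) x) = (T ^^ (k + j)) x" for j
    by (metis add.commute funpow_add o_apply)
  then show ?thesis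
    using x sub funpow_in_space by (auto simp: cyl_def)
qed

text \<open>By measure preservation, a cylinder is no larger than the shifted cylinder over
  any shifted sub-window of its times.\<close>

lemma emeasure_cyl_le_shift:
  assumes I: "countable I" "\<And>j. j \<in> I \<Longrightarrow> c (k + j) \<in> sets M" and sub: "(+) k ` I \<subseteq> J"
  shows "emeasure M (cyl M T c J) \<le> emeasure M (cyl M T (\<lambda>j. c (k + j)) I)"
proof -
  let ?C = "cyl M T (\<lambda>j. c (k + j)) I"
  have C: "?C \<in> sets M"
    using I by (intro cyl_sets) auto
  have "cyl M T c J \<subseteq> (T ^^ k) -` ?C \<inter> space M"
    using cyl_shift[OF _ sub] by (auto simp: cyl_def)
  then have "emeasure M (cyl M T c J) \<le> emeasure M ((T ^^ k) -` ?C \<inter> space M)"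
    using funpow_preimage_sets[OF C] by (rule emeasure_mono)
  also have "\<dots> = emeasure M ?C"
    using emeasure_funpow_preimage[OF C] .
  finally show ?thesis .
qed

lemma cylinder_cases:
  assumes \<alpha>: "countable_partition M \<alpha>" and Ac: "space M - A \<in> \<alpha>" and c: "\<forall>k<n. c k \<in> \<alpha>"
  obtains "cyl M T c {..<n} = avoiding M T A n"
    | k where "k < n" "c k \<subseteq> A" "cyl M T c {..<n} \<subseteq> first_entry M T A k"
proof (cases "\<forall>k<n. c k = space M - A")
  case True
  then have "cyl M T c {..<n} = avoiding M T A n"
    using funpow_in_space by (auto simp: cyl_def avoiding_def)
  then show ?thesis
    by (rule that(1))
next
  case False
  then have "\<exists>k. k < n \<and> c k \<noteq> space M - A"
    by blast
  then obtain k where k: "k < n" "c k \<noteq> space M - A"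
    and least: "\<forall>j<k. \<not> (j < n \<and> c j \<noteq> space M - A)"
    unfolding exists_least_iff[of "\<lambda>k. k < n \<and> c k \<noteq> space M - A"] by blast
  have before: "\<forall>j<k. c j = space M - A"
    using least k(1) by auto
  have "c k \<subseteq> A"
    using atom_subset_core[OF \<alpha> Ac] c k by blast
  moreover have "cyl M T c {..<n} \<subseteq> first_entry M T A k"
  proof
    fix x assume "x \<in> cyl M T c {..<n}"
    then have x: "x \<in> space M" "\<And>j. j < n \<Longrightarrow> (T ^^ j) x \<in> c j"
      by (auto simp: cyl_def)
    have "(T ^^ j) x \<notin> A" if "j < k" for j
      using x(2)[of j] before that k(1) by auto
    moreover have "(T ^^ k) x \<in> A"
      using x(2)[OF k(1)] \<open>c k \<subseteq> A\<close> by blast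
    ultimately show "x \<in> first_entry M T A k"
      using x(1) by (simp add: first_entry_def avoiding_def)
  qed
  ultimately show ?thesis
    using that(2) k(1) by blast
qed

text \<open>The union of the heavy cylinders of each length is measurable, and these unions
  decrease with the length, since truncating a heavy cylinder keeps it heavy.\<close>

lemma heavy_cylinders_sets:
  assumes \<alpha>: "countable_partition M \<alpha>"
  shows "\<Union>(heavy_cylinders M T \<alpha> B \<delta> m) \<in> sets M"
proof -
  have "heavy_cylinders M T \<alpha> B \<delta> m \<subseteq> {cyl M T c {..m} | c. \<forall>k\<in>{..m}. c k \<in> \<alpha>}"
  proof
    fix a assume "a \<in> heavy_cylinders M T \<alpha> B \<delta> m"
    then obtain c where "a = cyl M T c {..m}" "\<forall>k\<le>m. c k \<in> \<alpha>"
      unfolding heavy_cylinders_def by blast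
    then show "a \<in> {cyl M T c {..m} | c. \<forall>k\<in>{..m}. c k \<in> \<alpha>}"
      by fastforce
  qed
  moreover have "countable {cyl M T c {..m} | c. \<forall>k\<in>{..m}. c k \<in> \<alpha>}"
    using \<alpha> by (intro countable_cylinders) (auto simp: countable_partition_def)
  ultimately have "countable (heavy_cylinders M T \<alpha> B \<delta> m)"
    by (rule countable_subset)
  moreover have "heavy_cylinders M T \<alpha> B \<delta> m \<subseteq> sets M"
  proof
    fix a assume "a \<in> heavy_cylinders M T \<alpha> B \<delta> m"
    then obtain c where "a = cyl M T c {..m}" "\<forall>k\<le>m. c k \<in> \<alpha>"
      unfolding heavy_cylinders_def by blast
    then show "a \<in> sets M"
      using partition_cyl_sets[OF \<alpha>, of "{..m}" c] by (auto intro: countable_finite)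
  qed
  ultimately show ?thesis
    by (intro sets.countable_Union)
qed

lemma heavy_cylinders_decseq:
  assumes \<alpha>: "countable_partition M \<alpha>"
  shows "decseq (\<lambda>m. \<Union>(heavy_cylinders M T \<alpha> B \<delta> m))"
proof (rule decseq_SucI)
  fix m
  show "\<Union>(heavy_cylinders M T \<alpha> B \<delta> (Suc m)) \<subseteq> \<Union>(heavy_cylinders M T \<alpha> B \<delta> m)"
  proof
    fix x assume "x \<in> \<Union>(heavy_cylinders M T \<alpha> B \<delta> (Suc m))"
    then obtain c where c: "x \<in> cyl M T c {..Suc m}" "\<forall>k\<le>Suc m. c k \<in> \<alpha>" "c 0 \<subseteq> B"
        "\<delta> \<le> emeasure M (cyl M T c {..Suc m})"
      unfolding heavy_cylinders_def by blast
    have sub: "cyl M T c {..Suc m} \<subseteq> cyl M T c {..m}"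
      by (rule cyl_mono) auto
    have "cyl M T c {..m} \<in> sets M"
      using c(2) by (intro partition_cyl_sets[OF \<alpha>]) auto
    then have "\<delta> \<le> emeasure M (cyl M T c {..m})"
      using c(4) emeasure_mono[OF sub] order_trans by blast
    moreover have "\<forall>k\<le>m. c k \<in> \<alpha>"
      using c(2) by simp
    ultimately have "cyl M T c {..m} \<in> heavy_cylinders M T \<alpha> B \<delta> m"
      using c(3) unfolding heavy_cylinders_def by blast
    then show "x \<in> \<Union>(heavy_cylinders M T \<alpha> B \<delta> m)"
      using c(1) sub by blast
  qed
qed

lemma heavy_cylinder_limit:
  assumes \<alpha>: "countable_partition M \<alpha>" and B: "B \<in> sets M" "emeasure M B < \<infinity>"
    and \<delta>: "0 < \<delta>" and heavy: "\<And>m. heavy_cylinders M T \<alpha> B \<delta> m \<noteq> {}"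
  obtains c where "\<And>k. c k \<in> \<alpha>" "c 0 \<subseteq> B" "\<delta> \<le> emeasure M (cyl M T c UNIV)"
proof -
  let ?G = "\<lambda>m. \<Union>(heavy_cylinders M T \<alpha> B \<delta> m)"
  have "\<delta> \<le> emeasure M (?G m)" for m
  proof -
    obtain a where a: "a \<in> heavy_cylinders M T \<alpha> B \<delta> m"
      using heavy by blast
    then have "\<delta> \<le> emeasure M a"
      unfolding heavy_cylinders_def by blast
    also have "\<dots> \<le> emeasure M (?G m)"
      using a heavy_cylinders_sets[OF \<alpha>] by (intro emeasure_mono) auto
    finally show ?thesis .
  qed
  moreover have "emeasure M (?G 0) < \<infinity>"
    using emeasure_mono[OF heavy_cylinders_subset B(1)] B(2) by (rule le_less_trans)
  ultimately have "\<delta> \<le> emeasure M (\<Inter>m. ?G m)"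
    using heavy_cylinders_sets[OF \<alpha>] heavy_cylinders_decseq[OF \<alpha>]
    by (intro emeasure_Inter_decseq_lower_bound)
  then have "(\<Inter>m. ?G m) \<noteq> {}"
    using \<delta> by auto
  then obtain x where x: "\<And>m. x \<in> ?G m"
    by blast
  have "x \<in> space M"
    using x[of 0] heavy_cylinders_subset[of M T \<alpha> B \<delta> 0] sets.sets_into_space[OF B(1)] by blast
  then obtain c where c: "\<And>k. c k \<in> \<alpha>" "x \<in> cyl M T c UNIV"
    using point_name[OF \<alpha>] by blast
  note c_heavy = heavy_cylinders_point[OF \<alpha> x c]
  have "\<delta> \<le> emeasure M (\<Inter>m. cyl M T c {..m})"
  proof (rule emeasure_Inter_decseq_lower_bound)
    show "cyl M T c {..m} \<in> sets M" for m
      using c(1) by (intro partition_cyl_sets[OF \<alpha>]) auto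
    show "decseq (\<lambda>m. cyl M T c {..m})"
      by (intro decseq_SucI cyl_mono) auto
    have "cyl M T c {..0} \<subseteq> B"
      using cyl_subset_first_atom[of "{..0}" M T c] c_heavy(1) by auto
    then show "emeasure M (cyl M T c {..0}) < \<infinity>"
      using emeasure_mono[OF _ B(1)] B(2) le_less_trans by blast
    show "\<delta> \<le> emeasure M (cyl M T c {..m})" for m
      using c_heavy(2) .
  qed
  then show ?thesis
    using that[of c] c(1) c_heavy(1) by (simp add: cyl_UNIV_eq_Inter)
qed

end

locale type_II_infty_system = mpt_system +
  assumes type_II: "type_II_infty M T"
begin

lemma conservative: "conservative M T"
  using type_II unfolding type_II_infty_def by auto

lemma finite_invariant_null:
  assumes "invariant_set M T Y" "emeasure M Y < \<infinity>"
  shows "emeasure M Y = 0"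
  using type_II assms unfolding type_II_infty_def by (auto simp: zero_less_iff_neq_zero)

text \<open>An infinite cylinder of finite measure is null: otherwise a recurrent point makes its
  name periodic, and the union of the shifted cylinders is a finite invariant set of
  positive measure.\<close>

lemma infinite_cylinder_null:
  assumes \<alpha>: "countable_partition M \<alpha>" and c: "\<And>k. c k \<in> \<alpha>"
    and fin: "emeasure M (cyl M T c UNIV) < \<infinity>"
  shows "emeasure M (cyl M T c UNIV) = 0"
proof (rule ccontr)
  define Q where "Q j = cyl M T (\<lambda>k. c (j + k)) UNIV" for j
  have Q: "Q j \<in> sets M" for j
    unfolding Q_def using c by (intro partition_cyl_sets[OF \<alpha>]) auto
  assume "emeasure M (cyl M T c UNIV) \<noteq> 0"
  then have pos: "0 < emeasure M (Q 0)"
    by (simp add: Q_def zero_less_iff_neq_zero)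
  then obtain x n where x: "x \<in> Q 0" "0 < n" "(T ^^ n) x \<in> Q 0"
    using conservative_recurrence[OF conservative Q] by blast
  have "(T ^^ n) x \<in> Q n"
    using cyl_shift[of x c UNIV n UNIV] x(1) by (simp add: Q_def)
  then have "c (n + k) = c k" for k
    using cyl_names_agree[OF \<alpha> _ _ _ x(3)[unfolded Q_def], of "\<lambda>k. c (n + k)" k] c
    by (simp add: Q_def)
  then have cycle: "Q n = Q 0"
    by (simp add: Q_def)
  have step: "Q j \<subseteq> T -` Q (Suc j) \<inter> space M" for j
  proof
    fix y assume y: "y \<in> Q j"
    then have "(T ^^ 1) y \<in> cyl M T (\<lambda>k. c (j + (1 + k))) UNIV"
      using cyl_shift[of y "\<lambda>k. c (j + k)" UNIV 1 UNIV] by (simp add: Q_def)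
    moreover have "y \<in> space M"
      using y by (simp add: Q_def cyl_def)
    ultimately show "y \<in> T -` Q (Suc j) \<inter> space M"
      by (simp add: Q_def)
  qed
  have fin0: "emeasure M (Q 0) < \<infinity>"
    using fin by (simp add: Q_def)
  note Y = cyclic_chain_invariant[OF Q step cycle x(2) fin0]
  have "emeasure M (Q 0) \<le> emeasure M (\<Union>j<n. Q j)"
    using x(2) Q by (intro emeasure_mono) auto
  then show False
    using pos finite_invariant_null[OF Y] by simp
qed

lemma cylinders_in_finite_set_shrink:
  assumes \<alpha>: "countable_partition M \<alpha>" and B: "B \<in> sets M" "emeasure M B < \<infinity>"
    and \<delta>: "0 < \<delta>"
  obtains m where "\<And>c. \<forall>k\<le>m. c k \<in> \<alpha> \<Longrightarrow> c 0 \<subseteq> B \<Longrightarrow> emeasure M (cyl M T c {..m}) < \<delta>"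
proof (cases "\<exists>m. heavy_cylinders M T \<alpha> B \<delta> m = {}")
  case True
  then obtain m where no_heavy: "heavy_cylinders M T \<alpha> B \<delta> m = {}"
    by blast
  have "emeasure M (cyl M T c {..m}) < \<delta>" if "\<forall>k\<le>m. c k \<in> \<alpha>" "c 0 \<subseteq> B" for c
  proof (rule ccontr)
    assume "\<not> emeasure M (cyl M T c {..m}) < \<delta>"
    then have "cyl M T c {..m} \<in> heavy_cylinders M T \<alpha> B \<delta> m"
      using that unfolding heavy_cylinders_def by (auto simp: not_less)
    then show False
      using no_heavy by simp
  qed
  then show ?thesis
    by (rule that)
next
  case False
  then obtain c where c: "\<And>k. c k \<in> \<alpha>" "c 0 \<subseteq> B" "\<delta> \<le> emeasure M (cyl M T c UNIV)"
    using heavy_cylinder_limit[OF \<alpha> B \<delta>] by blast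
  have "cyl M T c UNIV \<subseteq> B"
    using cyl_subset_first_atom[of UNIV M T c] c(2) by auto
  then have "emeasure M (cyl M T c UNIV) < \<infinity>"
    using emeasure_mono[OF _ B(1)] B(2) le_less_trans by blast
  then have "emeasure M (cyl M T c UNIV) = 0"
    using infinite_cylinder_null[OF \<alpha>] c(1) by blast
  then show ?thesis
    using c(3) \<delta> by simp
qed

lemma eventually_atoms_small:
  assumes \<alpha>: "local_partition M \<alpha> A" and sweep: "sweep_out M T A" and \<delta>: "0 < \<delta>"
  shows "eventually (\<lambda>n. \<forall>a\<in>join_part M T \<alpha> n. emeasure M a < \<infinity> \<longrightarrow> emeasure M a < \<delta>) sequentially"
proof -
  have part: "countable_partition M \<alpha>" and A: "A \<in> sets M" "emeasure M A < \<infinity>"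
    and Ac: "space M - A \<in> \<alpha>"
    using \<alpha> unfolding local_partition_def by auto
  obtain m where m: "\<And>c. \<forall>k\<le>m. c k \<in> \<alpha> \<Longrightarrow> c 0 \<subseteq> A \<Longrightarrow> emeasure M (cyl M T c {..m}) < \<delta>"
    using cylinders_in_finite_set_shrink[OF part A \<delta>] by blast
  obtain K where K: "\<And>k. K \<le> k \<Longrightarrow> emeasure M (first_entry M T A k) < \<delta>"
    using order_tendstoD(2)[OF first_entry_tendsto_zero[OF A(1) conservative A(2)] \<delta>]
    unfolding eventually_sequentially by blast
  obtain N where N: "\<And>n. N \<le> n \<Longrightarrow> emeasure M (avoiding M T A n) < \<infinity> \<Longrightarrow>
      emeasure M (avoiding M T A n) < \<delta>"
    using eventually_avoiding_small[OF A(1) sweep \<delta>] unfolding eventually_sequentially by blast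
  show ?thesis
    unfolding eventually_sequentially
  proof (intro exI[of _ "N + K + Suc m"] allI impI ballI)
    fix n a assume n: "N + K + Suc m \<le> n" and "a \<in> join_part M T \<alpha> n"
      and fin: "emeasure M a < \<infinity>"
    then obtain c where a: "a = cyl M T c {..<n}" and c: "\<forall>k<n. c k \<in> \<alpha>"
      unfolding join_part_eq_cylinders by blast
    from cylinder_cases[OF part Ac c] show "emeasure M a < \<delta>"
    proof cases
      case 1
      then show ?thesis
        using N[of n] n fin a by simp
    next
      case (2 k)
      show ?thesis
      proof (cases "K \<le> k")
        case True
        have "emeasure M a \<le> emeasure M (first_entry M T A k)"
          unfolding a using 2(3) first_entry_sets[OF A(1)] by (rule emeasure_mono)
        then show ?thesis
          using K[OF True] by (rule le_less_trans)
      next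
        case False
        have "emeasure M a \<le> emeasure M (cyl M T (\<lambda>j. c (k + j)) {..m})"
          unfolding a using c n False part
          by (intro emeasure_cyl_le_shift) (auto simp: countable_partition_def)
        also have "\<dots> < \<delta>"
          using m[of "\<lambda>j. c (k + j)"] c n False 2(2) by auto
        finally show ?thesis .
      qed
    qed
  qed
qed

end

lemma Sup_tendsto_zeroI:
  fixes S :: "nat \<Rightarrow> ennreal set"
  assumes small: "\<And>\<delta>. 0 < \<delta> \<Longrightarrow> eventually (\<lambda>n. \<forall>z\<in>S n. z < \<delta>) sequentially"
  shows "(\<lambda>n. Sup (S n)) \<longlonglongrightarrow> 0"
proof (rule order_tendstoI)
  fix y :: ennreal assume "0 < y"
  then obtain \<delta> where \<delta>: "0 < \<delta>" "\<delta> < y"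
    using dense by blast
  show "eventually (\<lambda>n. Sup (S n) < y) sequentially"
    using small[OF \<delta>(1)] by eventually_elim (meson Sup_least \<delta>(2) le_less_trans less_imp_le)
qed simp

theorem lemma6p1:
  fixes M :: "'a measure" and T :: "'a \<Rightarrow> 'a" and \<alpha> :: "'a set set" and A :: "'a set"
  assumes "standard_sigma_finite M"
    and "mpt M T"
    and "type_II_infty M T"
    and "local_partition M \<alpha> A"
    and "sweep_out M T A"
  shows "(\<lambda>n. Sup {emeasure M a | a. a \<in> join_part M T \<alpha> n \<and> 0 < emeasure M a \<and> emeasure M a < \<infinity>})
           \<longlonglongrightarrow> 0"
proof (rule Sup_tendsto_zeroI)
  interpret type_II_infty_system M T
    using assms(2,3) by unfold_locales
  fix \<delta> :: ennreal assume "0 < \<delta>"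
  from eventually_atoms_small[OF assms(4,5) this]
  show "eventually (\<lambda>n. \<forall>z\<in>{emeasure M a | a. a \<in> join_part M T \<alpha> n \<and> 0 < emeasure M a
      \<and> emeasure M a < \<infinity>}. z < \<delta>) sequentially"
    by eventually_elim auto
qed

end
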